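(* Let $\sigma\in\mathfrak{S}_n$ and $P=\Psi_n(\sigma)$. Let $1\leq i<j\leq n$. Then the letter $i$ is immediately followed by the letter $j$ in the word $\sigma(1)\sigma(2)\cdots\sigma(n)$ if and only if the three following conditions hold: (a) $i<_h j$ in $P$; (b) for all $x\in P$, if $x<_h j$ in $P$ then $x\leq_h i$ or $x\geq_r i$; (c) for all $x\in P$, if $x>_h i$ in $P$ then $x\geq_h j$ or $x\leq_r j$.
   Context: For $\sigma\in\mathfrak{S}_n$, $\Psi_n(\sigma)=P_\sigma$ is the double poset on $\{1,\ldots,n\}$ with $i\leq_h j$ iff ($i\leq j$ and $\sigma^{-1}(i)\leq\sigma^{-1}(j)$), and $i\leq_r j$ iff ($i\leq j$ and $\sigma^{-1}(i)\geq\sigma^{-1}(j)$). (It is a plane poset: two distinct elements are $\leq_h$-comparable iff they are not $\leq_r$-comparable.) Strict versions $<_h,<_r$ denote the orders with equality excluded. *)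

theory Defs
  imports "HOL-Combinatorics.Permutations"
begin

text \<open>A permutation sigma of {1..n} is a function nat => nat with sigma permutes {1..n};
  the word is sigma(1) sigma(2) ... sigma(n). The double poset Psi_n(sigma) lives on {1..n}.\<close>

definition leq_h :: "(nat \<Rightarrow> nat) \<Rightarrow> nat \<Rightarrow> nat \<Rightarrow> bool" where
  "leq_h \<sigma> i j \<longleftrightarrow> i \<le> j \<and> inv \<sigma> i \<le> inv \<sigma> j"

definition leq_r :: "(nat \<Rightarrow> nat) \<Rightarrow> nat \<Rightarrow> nat \<Rightarrow> bool" where
  "leq_r \<sigma> i j \<longleftrightarrow> i \<le> j \<and> inv \<sigma> i \<ge> inv \<sigma> j"

definition less_h :: "(nat \<Rightarrow> nat) \<Rightarrow> nat \<Rightarrow> nat \<Rightarrow> bool" where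
  "less_h \<sigma> i j \<longleftrightarrow> leq_h \<sigma> i j \<and> i \<noteq> j"

definition less_r :: "(nat \<Rightarrow> nat) \<Rightarrow> nat \<Rightarrow> nat \<Rightarrow> bool" where
  "less_r \<sigma> i j \<longleftrightarrow> leq_r \<sigma> i j \<and> i \<noteq> j"

definition imm_followed :: "nat \<Rightarrow> (nat \<Rightarrow> nat) \<Rightarrow> nat \<Rightarrow> nat \<Rightarrow> bool" where
  "imm_followed n \<sigma> i j \<longleftrightarrow> (\<exists>k. 1 \<le> k \<and> k < n \<and> \<sigma> k = i \<and> \<sigma> (k + 1) = j)"

end

theory Submission
  imports Defs
begin

text \<open>Read everything through the position map \<open>inv \<sigma>\<close>. Each of the alternatives in (b)
  and (c) just says that one letter stands weakly to the left of another, so (b) and (c)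
  together forbid any letter standing strictly between \<open>i\<close> and \<open>j\<close> in the word: such a letter
  is either smaller than \<open>j\<close>, and then violates (b), or larger than \<open>j\<close>, and then violates (c).
  Given (a), no letter in between means that \<open>j\<close> occupies the position right after \<open>i\<close>.\<close>

lemma leq_h_or_leq_r_iff_inv_le:
  "leq_h \<sigma> a b \<or> leq_r \<sigma> b a \<longleftrightarrow> inv \<sigma> a \<le> inv \<sigma> b"
  unfolding leq_h_def leq_r_def by auto

lemma less_h_iff_inv_less:
  assumes "inj (inv \<sigma>)" and "a < b"
  shows "less_h \<sigma> a b \<longleftrightarrow> inv \<sigma> a < inv \<sigma> b"
  using assms injD[OF assms(1)] unfolding less_h_def leq_h_def
  by (metis less_imp_neq nless_le)

lemma imm_followed_iff_inv_Suc:
  assumes "\<sigma> permutes {1..n}" and "i \<in> {1..n}" and "j \<in> {1..n}"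
  shows "imm_followed n \<sigma> i j \<longleftrightarrow> inv \<sigma> j = Suc (inv \<sigma> i)"
proof
  assume "imm_followed n \<sigma> i j"
  then obtain k where "\<sigma> k = i" and "\<sigma> (k + 1) = j"
    unfolding imm_followed_def by blast
  then show "inv \<sigma> j = Suc (inv \<sigma> i)"
    using permutes_inverses(2)[OF assms(1)] by fastforce
next
  assume adjacent: "inv \<sigma> j = Suc (inv \<sigma> i)"
  have "inv \<sigma> i \<in> {1..n}" and "inv \<sigma> j \<in> {1..n}"
    using assms permutes_in_image[OF permutes_inv[OF assms(1)]] by auto
  then show "imm_followed n \<sigma> i j"
    unfolding imm_followed_def
    using adjacent permutes_inverses(1)[OF assms(1)] by (metis Suc_eq_plus1 Suc_le_eq atLeastAtMost_iff)
qed

lemma permutes_Suc_iff_none_between: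
  assumes "p permutes {1..n}" and "a \<in> {1..n}" and "b \<in> {1..n}"
  shows "p b = Suc (p a) \<longleftrightarrow> p a < p b \<and> (\<forall>x\<in>{1..n}. \<not> (p a < p x \<and> p x < p b))"
proof
  assume "p b = Suc (p a)"
  then show "p a < p b \<and> (\<forall>x\<in>{1..n}. \<not> (p a < p x \<and> p x < p b))" by auto
next
  assume "p a < p b \<and> (\<forall>x\<in>{1..n}. \<not> (p a < p x \<and> p x < p b))"
  then have less: "p a < p b" and none_between: "\<forall>x\<in>{1..n}. \<not> (p a < p x \<and> p x < p b)"
    by auto
  show "p b = Suc (p a)"
  proof (rule ccontr)
    assume "p b \<noteq> Suc (p a)"
    then have gap: "Suc (p a) < p b" using less by simp
    have "p b \<le> n" using permutes_in_image[OF assms(1)] assms(3) by (meson atLeastAtMost_iff)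
    then have "Suc (p a) \<in> {1..n}" using gap by simp
    then obtain x where "x \<in> {1..n}" and "p x = Suc (p a)"
      using permutes_image[OF assms(1)] by (metis imageE)
    then show False using none_between gap by (metis lessI)
  qed
qed

lemma conditions_iff_none_between:
  assumes "inj (inv \<sigma>)" and "i < j"
  shows "(\<forall>x\<in>A. less_h \<sigma> x j \<longrightarrow> inv \<sigma> x \<le> inv \<sigma> i) \<and>
         (\<forall>x\<in>A. less_h \<sigma> i x \<longrightarrow> inv \<sigma> j \<le> inv \<sigma> x) \<longleftrightarrow>
         (\<forall>x\<in>A. \<not> (inv \<sigma> i < inv \<sigma> x \<and> inv \<sigma> x < inv \<sigma> j))"
proof
  assume conditions: "(\<forall>x\<in>A. less_h \<sigma> x j \<longrightarrow> inv \<sigma> x \<le> inv \<sigma> i) \<and>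
                      (\<forall>x\<in>A. less_h \<sigma> i x \<longrightarrow> inv \<sigma> j \<le> inv \<sigma> x)"
  show "\<forall>x\<in>A. \<not> (inv \<sigma> i < inv \<sigma> x \<and> inv \<sigma> x < inv \<sigma> j)"
  proof (intro ballI notI)
    fix x assume "x \<in> A" and between: "inv \<sigma> i < inv \<sigma> x \<and> inv \<sigma> x < inv \<sigma> j"
    have "x < j \<or> i < x" using assms(2) by linarith
    then show False
      using conditions \<open>x \<in> A\<close> between less_h_iff_inv_less[OF assms(1)] by fastforce
  qed
next
  assume none_between: "\<forall>x\<in>A. \<not> (inv \<sigma> i < inv \<sigma> x \<and> inv \<sigma> x < inv \<sigma> j)"
  have "inv \<sigma> x < inv \<sigma> j" if "less_h \<sigma> x j" for x
    using that injD[OF assms(1)] unfolding less_h_def leq_h_def by (metis le_neq_implies_less)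
  moreover have "inv \<sigma> i < inv \<sigma> x" if "less_h \<sigma> i x" for x
    using that injD[OF assms(1)] unfolding less_h_def leq_h_def by (metis le_neq_implies_less)
  ultimately show "(\<forall>x\<in>A. less_h \<sigma> x j \<longrightarrow> inv \<sigma> x \<le> inv \<sigma> i) \<and>
                   (\<forall>x\<in>A. less_h \<sigma> i x \<longrightarrow> inv \<sigma> j \<le> inv \<sigma> x)"
    using none_between by (meson not_le)
qed

theorem lemma11:
  fixes n :: nat and \<sigma> :: "nat \<Rightarrow> nat" and i j :: nat
  assumes "\<sigma> permutes {1..n}"
    and "1 \<le> i" and "i < j" and "j \<le> n"
  shows "imm_followed n \<sigma> i j \<longleftrightarrow>
           (less_h \<sigma> i j \<and>
            (\<forall>x\<in>{1..n}. less_h \<sigma> x j \<longrightarrow> leq_h \<sigma> x i \<or> leq_r \<sigma> i x) \<and>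
            (\<forall>x\<in>{1..n}. less_h \<sigma> i x \<longrightarrow> leq_h \<sigma> j x \<or> leq_r \<sigma> x j))"
proof -
  have positions: "inv \<sigma> permutes {1..n}" using permutes_inv[OF assms(1)] .
  then have "inj (inv \<sigma>)" by (rule permutes_inj)
  have letters: "i \<in> {1..n}" "j \<in> {1..n}" using assms by auto
  have "imm_followed n \<sigma> i j \<longleftrightarrow>
          inv \<sigma> i < inv \<sigma> j \<and> (\<forall>x\<in>{1..n}. \<not> (inv \<sigma> i < inv \<sigma> x \<and> inv \<sigma> x < inv \<sigma> j))"
    using imm_followed_iff_inv_Suc[OF assms(1) letters]
      permutes_Suc_iff_none_between[OF positions letters] by simp
  also have "\<dots> \<longleftrightarrow> less_h \<sigma> i j \<and>
          (\<forall>x\<in>{1..n}. less_h \<sigma> x j \<longrightarrow> inv \<sigma> x \<le> inv \<sigma> i) \<and>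
          (\<forall>x\<in>{1..n}. less_h \<sigma> i x \<longrightarrow> inv \<sigma> j \<le> inv \<sigma> x)"
    using conditions_iff_none_between[OF \<open>inj (inv \<sigma>)\<close> \<open>i < j\<close>]
      less_h_iff_inv_less[OF \<open>inj (inv \<sigma>)\<close> \<open>i < j\<close>] by blast
  finally show ?thesis by (simp only: leq_h_or_leq_r_iff_inv_le)
qed

end
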